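(* Let $1\le M<N$ and $\epsilon>0$, and let $F(\delta,K,N)$ denote the optimal Parseval Paulsen function. Then \[F(\epsilon,M,N)\le 8\,F\Big(\epsilon\frac{M}{N-M},\,N-M,\,N\Big).\]
   Context: $\mathcal H_K$ denotes a $K$-dimensional Hilbert space. A family $\{f_i\}_{i=1}^N$ in $\mathcal H_K$ is a Parseval frame if $\sum_{i=1}^N|\langle f,f_i\rangle|^2=\|f\|^2$ for all $f\in\mathcal H_K$; it is equal norm if all $\|f_i\|$ are equal; it is $\delta$-nearly equal norm if $(1-\delta)\frac KN\le\|f_i\|^2\le(1+\delta)\frac KN$ for all $i$. For $\mathcal F=\{f_i\}_{i=1}^N$, $\mathcal G=\{g_i\}_{i=1}^N$, $d(\mathcal F,\mathcal G)=\sum_{i=1}^N\|f_i-g_i\|^2$. The optimal Parseval Paulsen function $F(\delta,K,N)$ is the supremum, over all $\delta$-nearly equal norm Parseval frames $\mathcal F$ of $N$ vectors for $\mathcal H_K$, of $\inf\{d(\mathcal F,\mathcal G):\mathcal G\text{ an equal norm Parseval frame of }N\text{ vectors for }\mathcal H_K\}$. *)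

theory Defs
  imports Complex_Main
begin

text \<open>Vectors of the K-dimensional Hilbert space H_K = C^K are modelled as
  functions nat => complex, of which only the coordinates j < K are relevant.
  A family of N vectors is a function nat => (nat => complex), indexed by i < N.\<close>

definition vinner :: "nat \<Rightarrow> (nat \<Rightarrow> complex) \<Rightarrow> (nat \<Rightarrow> complex) \<Rightarrow> complex" where
  "vinner K f g = (\<Sum>j<K. f j * cnj (g j))"

definition vnorm2 :: "nat \<Rightarrow> (nat \<Rightarrow> complex) \<Rightarrow> real" where
  "vnorm2 K f = (\<Sum>j<K. (cmod (f j))^2)"

definition parseval_frame :: "nat \<Rightarrow> nat \<Rightarrow> (nat \<Rightarrow> nat \<Rightarrow> complex) \<Rightarrow> bool" where
  "parseval_frame K N F \<longleftrightarrow>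
     (\<forall>f. (\<Sum>i<N. (cmod (vinner K f (F i)))^2) = vnorm2 K f)"

definition equal_norm :: "nat \<Rightarrow> nat \<Rightarrow> (nat \<Rightarrow> nat \<Rightarrow> complex) \<Rightarrow> bool" where
  "equal_norm K N F \<longleftrightarrow> (\<forall>i<N. \<forall>i'<N. vnorm2 K (F i) = vnorm2 K (F i'))"

definition nearly_equal_norm :: "real \<Rightarrow> nat \<Rightarrow> nat \<Rightarrow> (nat \<Rightarrow> nat \<Rightarrow> complex) \<Rightarrow> bool" where
  "nearly_equal_norm \<delta> K N F \<longleftrightarrow>
     (\<forall>i<N. (1 - \<delta>) * real K / real N \<le> vnorm2 K (F i) \<and>
             vnorm2 K (F i) \<le> (1 + \<delta>) * real K / real N)"

definition frame_dist :: "nat \<Rightarrow> nat \<Rightarrow> (nat \<Rightarrow> nat \<Rightarrow> complex) \<Rightarrow> (nat \<Rightarrow> nat \<Rightarrow> complex) \<Rightarrow> real" where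
  "frame_dist K N F G = (\<Sum>i<N. vnorm2 K (\<lambda>j. F i j - G i j))"

definition paulsen_F :: "real \<Rightarrow> nat \<Rightarrow> nat \<Rightarrow> real" where
  "paulsen_F \<delta> K N =
     Sup {Inf {frame_dist K N F G | G. parseval_frame K N G \<and> equal_norm K N G} | F.
          parseval_frame K N F \<and> nearly_equal_norm \<delta> K N F}"

end

theory Submission
  imports Defs "Jordan_Normal_Form.Spectral_Radius"
begin

(* A Parseval frame of N vectors for C^K is the same as an N x K matrix with orthonormal
   columns. Such an F for C^M has a Naimark complement Q for C^(N-M), with F F* + Q Q* = I;
   the row norms of Q are 1 minus those of F, so Q is eps M/(N-M)-nearly equal norm.
   Given an equal norm Parseval frame G' close to Q, its Naimark complement R is an equal
   norm Parseval frame for C^M with F F* - R R* = G' G'* - Q Q*. The squared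
   Hilbert-Schmidt distance of Gram matrices is at most 4 times the frame distance, and
   conversely some rotation R U of R (U unitary, from the singular value decomposition of
   R* F) is at most that Gram distance away from F. Hence the distance of F to the equal
   norm Parseval frames is at most 4 times that of Q, which yields the theorem (even with
   constant 4). *)

text \<open>Matrices are handled as functions of type nat => nat => complex, with only the
  entries inside the relevant index range mattering.\<close>

lemma nonzero_vec_has_nonzero_entry:
  assumes "v \<in> carrier_vec n" "v \<noteq> 0\<^sub>v n"
  shows "\<exists>j<n. v $ j \<noteq> 0"
proof (rule ccontr)
  assume "\<not> ?thesis"
  hence "v = 0\<^sub>v n" using assms(1) by (intro eq_vecI) auto
  thus False using assms(2) by simp
qed

text \<open>Every square complex matrix has an eigenvector (fundamental theorem of algebra).\<close>
lemma exists_eigenvector: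
  fixes C :: "nat \<Rightarrow> nat \<Rightarrow> complex"
  assumes "n > 0"
  shows "\<exists>\<mu> x. (\<exists>j<n. x j \<noteq> 0) \<and> (\<forall>i<n. (\<Sum>j<n. C i j * x j) = \<mu> * x i)"
proof -
  define A where "A = mat n n (\<lambda>(i,j). C i j)"
  have A: "A \<in> carrier_mat n n" unfolding A_def by simp
  from spectrum_non_empty[OF A assms] obtain \<mu> where "\<mu> \<in> spectrum A" by auto
  hence "eigenvalue A \<mu>" unfolding spectrum_def by auto
  then obtain v where "eigenvector A v \<mu>" unfolding eigenvalue_def by auto
  hence v: "v \<in> carrier_vec n" "v \<noteq> 0\<^sub>v n" "A *\<^sub>v v = \<mu> \<cdot>\<^sub>v v"
    unfolding eigenvector_def using A by auto
  have "(\<Sum>j<n. C i j * v $ j) = \<mu> * v $ i" if i: "i < n" for i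
  proof -
    have "(A *\<^sub>v v) $ i = (\<mu> \<cdot>\<^sub>v v) $ i" using v(3) by simp
    thus ?thesis using i v(1) by (simp add: A_def scalar_prod_def lessThan_atLeast0)
  qed
  thus ?thesis using nonzero_vec_has_nonzero_entry[OF v(1,2)] by blast
qed

lemma exists_kernel_vector:
  fixes u :: "nat \<Rightarrow> nat \<Rightarrow> complex"
  assumes "k < n"
  shows "\<exists>x. (\<exists>j<n. x j \<noteq> 0) \<and> (\<forall>a<k. (\<Sum>j<n. u a j * x j) = 0)"
proof -
  define row where "row = (\<lambda>i. if i < k then vec n (\<lambda>j. u i j) else 0\<^sub>v n)"
  define A where "A = mat\<^sub>r n n (\<lambda>i. if i = n - 1 then 0\<^sub>v n else row i)"
  have A: "A \<in> carrier_mat n n" unfolding A_def by simp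
  have "det A = 0" unfolding A_def using assms by (intro det_row_0) (auto simp: row_def)
  then obtain v where v: "v \<in> carrier_vec n" "v \<noteq> 0\<^sub>v n" "A *\<^sub>v v = 0\<^sub>v n"
    using det_0_iff_vec_prod_zero_field[OF A] by auto
  have "(\<Sum>j<n. u a j * v $ j) = 0" if a: "a < k" for a
  proof -
    have "(A *\<^sub>v v) $ a = 0" using v(3) a assms by simp
    moreover have "a \<noteq> n - 1" using a assms by simp
    ultimately show ?thesis using a assms v(1) by (simp add: A_def row_def scalar_prod_def lessThan_atLeast0)
  qed
  thus ?thesis using nonzero_vec_has_nonzero_entry[OF v(1,2)] by blast
qed

lemma right_inverse_imp_left_inverse:
  fixes A B :: "nat \<Rightarrow> nat \<Rightarrow> complex"
  assumes "\<forall>i<n. \<forall>j<n. (\<Sum>k<n. A i k * B k j) = (if i = j then 1 else 0)"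
  shows "\<forall>i<n. \<forall>j<n. (\<Sum>k<n. B i k * A k j) = (if i = j then 1 else 0)"
proof -
  define A' where "A' = mat n n (\<lambda>(i,j). A i j)"
  define B' where "B' = mat n n (\<lambda>(i,j). B i j)"
  have c: "A' \<in> carrier_mat n n" "B' \<in> carrier_mat n n" unfolding A'_def B'_def by auto
  have "A' * B' = 1\<^sub>m n"
    by (rule eq_matI)
      (use assms in \<open>auto simp: A'_def B'_def scalar_prod_def lessThan_atLeast0 row_def col_def\<close>)
  hence BA: "B' * A' = 1\<^sub>m n" using mat_mult_left_right_inverse c by blast
  show ?thesis
  proof (intro allI impI)
    fix i j assume ij: "i < n" "j < n"
    have "(B' * A') $$ (i,j) = (1\<^sub>m n) $$ (i,j)" using BA by simp
    thus "(\<Sum>k<n. B i k * A k j) = (if i = j then 1 else 0)" using ij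
      by (simp add: A'_def B'_def scalar_prod_def lessThan_atLeast0 row_def col_def)
  qed
qed


lemma of_real_cmod_sq: "complex_of_real (cmod z) ^ 2 = z * cnj z"
  by (metis complex_norm_square of_real_power)

lemma vinner_self: "vinner n x x = complex_of_real (vnorm2 n x)"
  by (simp add: vinner_def vnorm2_def of_real_cmod_sq of_real_sum)

lemma vinner_cnj: "vinner n a b = cnj (vinner n b a)"
  by (simp add: vinner_def cnj_sum mult.commute)

lemma vinner_scale_left: "vinner n (\<lambda>j. c * x j) z = c * vinner n x z"
  by (simp add: vinner_def sum_distrib_left mult_ac)

lemma vinner_scale_right: "vinner n z (\<lambda>j. c * x j) = cnj c * vinner n z x"
  by (simp add: vinner_def sum_distrib_left mult_ac)

lemma vinner_sum_left: "vinner n (\<lambda>i. \<Sum>q\<in>A. f q i) z = (\<Sum>q\<in>A. vinner n (f q) z)"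
  unfolding vinner_def by (simp add: sum_distrib_right) (rule sum.swap)

lemma vinner_sum_right: "vinner n z (\<lambda>i. \<Sum>q\<in>A. f q i) = (\<Sum>q\<in>A. vinner n z (f q))"
  unfolding vinner_def by (simp add: sum_distrib_left cnj_sum) (rule sum.swap)

lemma vnorm2_nonneg: "vnorm2 n x \<ge> 0"
  unfolding vnorm2_def by (intro sum_nonneg) auto

lemma vnorm2_pos:
  assumes "j < n" "x j \<noteq> 0"
  shows "vnorm2 n x > 0"
proof -
  have "(cmod (x j))^2 \<le> vnorm2 n x"
    unfolding vnorm2_def using assms by (intro member_le_sum) auto
  moreover have "(cmod (x j))^2 > 0" using assms by simp
  ultimately show ?thesis by linarith
qed

lemma vnorm2_scale: "vnorm2 n (\<lambda>j. c * x j) = (cmod c)^2 * vnorm2 n x"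
  unfolding vnorm2_def by (simp add: norm_mult power_mult_distrib sum_distrib_left)

lemma vnorm2_eq_0_imp_zero: "vnorm2 n x = 0 \<Longrightarrow> j < n \<Longrightarrow> x j = 0"
  using vnorm2_pos[of j n x] by force

lemma normalized_vector:
  assumes "vnorm2 n x > 0"
  defines "y \<equiv> (\<lambda>j. complex_of_real (1 / sqrt (vnorm2 n x)) * x j)"
  shows "vinner n y y = 1" and "\<And>z. vinner n x z = 0 \<Longrightarrow> vinner n y z = 0"
proof -
  let ?s = "vnorm2 n x"
  have "vinner n y y = complex_of_real ((1 / sqrt ?s) * (1 / sqrt ?s) * ?s)"
    unfolding y_def vinner_scale_left vinner_scale_right vinner_self
    by (simp only: complex_cnj_complex_of_real of_real_mult mult.assoc)
  also have "(1 / sqrt ?s) * (1 / sqrt ?s) * ?s = 1"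
    using assms by (simp add: field_simps)
  finally show "vinner n y y = 1" by simp
  fix z assume "vinner n x z = 0"
  thus "vinner n y z = 0" unfolding y_def vinner_scale_left by simp
qed

lemma sum_lessThan_single:
  fixes g :: "nat \<Rightarrow> 'a::comm_monoid_add"
  assumes "a < K" "\<And>j. j \<noteq> a \<Longrightarrow> g j = 0"
  shows "(\<Sum>j<K. g j) = g a"
proof -
  have "(\<Sum>j<K. g j) = (\<Sum>j\<in>{a}. g j)"
    using assms by (intro sum.mono_neutral_right) auto
  thus ?thesis by simp
qed

lemma sum_lessThan_pair:
  fixes g :: "nat \<Rightarrow> 'a::comm_monoid_add"
  assumes "a < K" "b < K" "a \<noteq> b" "\<And>j. j \<noteq> a \<Longrightarrow> j \<noteq> b \<Longrightarrow> g j = 0"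
  shows "(\<Sum>j<K. g j) = g a + g b"
proof -
  have "(\<Sum>j<K. g j) = (\<Sum>j\<in>{a,b}. g j)"
    using assms by (intro sum.mono_neutral_right) auto
  thus ?thesis using assms(3) by simp
qed

lemma sum_swap3:
  "(\<Sum>a\<in>A. \<Sum>b\<in>B. \<Sum>c\<in>C. g a b c) = (\<Sum>b\<in>B. \<Sum>c\<in>C. \<Sum>a\<in>A. (g a b c :: 'z::comm_monoid_add))"
  by (subst sum.swap, rule sum.cong[OF refl], rule sum.swap)

lemma sum_swap4:
  "(\<Sum>a\<in>A. \<Sum>b\<in>B. \<Sum>c\<in>C. \<Sum>d\<in>D. f a b c d)
     = (\<Sum>c\<in>C. \<Sum>d\<in>D. \<Sum>a\<in>A. \<Sum>b\<in>B. (f a b c d :: 'z::comm_monoid_add))"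
proof -
  have "(\<Sum>a\<in>A. \<Sum>b\<in>B. \<Sum>c\<in>C. \<Sum>d\<in>D. f a b c d) = (\<Sum>a\<in>A. \<Sum>c\<in>C. \<Sum>d\<in>D. \<Sum>b\<in>B. f a b c d)"
    by (rule sum.cong[OF refl], rule sum_swap3)
  also have "\<dots> = (\<Sum>c\<in>C. \<Sum>d\<in>D. \<Sum>a\<in>A. \<Sum>b\<in>B. f a b c d)" by (rule sum_swap3)
  finally show ?thesis .
qed

lemma sum_lessThan_add: "(\<Sum>i<(m::nat)+n. f i) = (\<Sum>i<m. f i) + (\<Sum>i<n. f (m+i))"
  by (induction n) (simp_all add: add.assoc)


section \<open>Parseval frames are matrices with orthonormal columns\<close>

definition orthonormal_on :: "nat \<Rightarrow> nat set \<Rightarrow> (nat \<Rightarrow> nat \<Rightarrow> complex) \<Rightarrow> bool" where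
  "orthonormal_on n I u \<longleftrightarrow> (\<forall>a\<in>I. \<forall>b\<in>I. vinner n (u a) (u b) = (if a = b then 1 else 0))"

definition orthonormal_cols :: "nat \<Rightarrow> nat \<Rightarrow> (nat \<Rightarrow> nat \<Rightarrow> complex) \<Rightarrow> bool" where
  "orthonormal_cols n m A \<longleftrightarrow>
     (\<forall>j<m. \<forall>l<m. (\<Sum>i<n. A i j * cnj (A i l)) = (if j = l then 1 else 0))"

lemma orthonormal_cols_iff_on: "orthonormal_cols n m A \<longleftrightarrow> orthonormal_on n {..<m} (\<lambda>j i. A i j)"
  unfolding orthonormal_cols_def orthonormal_on_def vinner_def by auto

lemma frame_operator_form:
  "complex_of_real (\<Sum>i<N. (cmod (vinner K f (F i)))^2) =
   (\<Sum>j<K. \<Sum>l<K. f j * cnj (f l) * cnj (\<Sum>i<N. F i j * cnj (F i l)))"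
proof -
  have "complex_of_real (\<Sum>i<N. (cmod (vinner K f (F i)))^2) =
     (\<Sum>i<N. \<Sum>j<K. \<Sum>l<K. f j * cnj (f l) * (cnj (F i j) * F i l))"
    by (simp add: of_real_sum of_real_cmod_sq vinner_def cnj_sum sum_product mult_ac)
  also have "\<dots> = (\<Sum>j<K. \<Sum>i<N. \<Sum>l<K. f j * cnj (f l) * (cnj (F i j) * F i l))"
    by (rule sum.swap)
  also have "\<dots> = (\<Sum>j<K. \<Sum>l<K. \<Sum>i<N. f j * cnj (f l) * (cnj (F i j) * F i l))"
    by (rule sum.cong[OF refl], rule sum.swap)
  also have "\<dots> = (\<Sum>j<K. \<Sum>l<K. f j * cnj (f l) * cnj (\<Sum>i<N. F i j * cnj (F i l)))"
    by (simp add: cnj_sum sum_distrib_left mult_ac)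
  finally show ?thesis .
qed

lemma orthonormal_cols_imp_parseval:
  assumes "orthonormal_cols N K F"
  shows "parseval_frame K N F"
  unfolding parseval_frame_def
proof
  fix f
  have "complex_of_real (\<Sum>i<N. (cmod (vinner K f (F i)))^2) =
     (\<Sum>j<K. \<Sum>l<K. f j * cnj (f l) * cnj (if j = l then 1 else 0))"
    unfolding frame_operator_form using assms unfolding orthonormal_cols_def
    by (intro sum.cong refl) auto
  also have "\<dots> = vinner K f f"
    unfolding vinner_def by (intro sum.cong refl) (simp add: if_distrib sum.delta cong: if_cong)
  finally show "(\<Sum>i<N. (cmod (vinner K f (F i)))^2) = vnorm2 K f"
    unfolding vinner_self of_real_eq_iff .
qed

lemma polarization_identity:
  fixes B :: "nat \<Rightarrow> nat \<Rightarrow> complex"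
  assumes Q: "\<And>f. (\<Sum>j<K. \<Sum>l<K. f j * cnj (f l) * B j l) = (\<Sum>j<K. f j * cnj (f j))"
    and ab: "a < K" "b < K"
  shows "B a b = (if a = b then 1 else 0)"
proof -
  have diag: "B c c = 1" if c: "c < K" for c
  proof -
    define f where "f = (\<lambda>j. if j = c then (1::complex) else 0)"
    have "(\<Sum>j<K. \<Sum>l<K. f j * cnj (f l) * B j l) = B c c"
      by (subst sum_lessThan_single[OF c], simp add: f_def,
          subst sum_lessThan_single[OF c], simp add: f_def, simp add: f_def)
    moreover have "(\<Sum>j<K. f j * cnj (f j)) = 1"
      by (subst sum_lessThan_single[OF c]) (simp_all add: f_def)
    ultimately show ?thesis using Q[of f] by simp
  qed
  have mixed: "cnj z * B a b + z * B b a = 0" if ne: "a \<noteq> b" for z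
  proof -
    define f where "f = (\<lambda>j. if j = a then (1::complex) else if j = b then z else 0)"
    have "(\<Sum>j<K. \<Sum>l<K. f j * cnj (f l) * B j l)
       = (f a * cnj (f a) * B a a + f a * cnj (f b) * B a b)
       + (f b * cnj (f a) * B b a + f b * cnj (f b) * B b b)"
      by (subst sum_lessThan_pair[OF ab ne], simp add: f_def,
          subst sum_lessThan_pair[OF ab ne], simp add: f_def, simp)
    also have "\<dots> = 1 + cnj z * B a b + z * B b a + z * cnj z"
      using diag ab ne by (simp add: f_def)
    finally have lhs: "(\<Sum>j<K. \<Sum>l<K. f j * cnj (f l) * B j l) = \<dots>" .
    have rhs: "(\<Sum>j<K. f j * cnj (f j)) = 1 + z * cnj z"
      by (subst sum_lessThan_pair[OF ab ne]) (use ne in \<open>simp_all add: f_def\<close>)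
    show ?thesis using Q[of f] lhs rhs by simp
  qed
  show ?thesis
  proof (cases "a = b")
    case True thus ?thesis using diag ab by simp
  next
    case False
    have "B a b + B b a = 0" using mixed[OF False, of 1] by simp
    moreover have "\<i> * (B b a - B a b) = 0"
      using mixed[OF False, of \<i>] by (simp add: algebra_simps)
    ultimately show ?thesis using False by simp
  qed
qed

lemma parseval_imp_orthonormal_cols:
  assumes P: "parseval_frame K N F"
  shows "orthonormal_cols N K F"
proof -
  have "(\<Sum>j<K. \<Sum>l<K. f j * cnj (f l) * cnj (\<Sum>i<N. F i j * cnj (F i l)))
      = (\<Sum>j<K. f j * cnj (f j))" for f
  proof -
    have "(\<Sum>j<K. \<Sum>l<K. f j * cnj (f l) * cnj (\<Sum>i<N. F i j * cnj (F i l)))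
        = complex_of_real (vnorm2 K f)"
      using P unfolding parseval_frame_def frame_operator_form[symmetric] by metis
    thus ?thesis by (simp add: vinner_self[symmetric] vinner_def)
  qed
  note cnj_form = polarization_identity[OF this]
  have "(\<Sum>i<N. F i j * cnj (F i l)) = (if j = l then 1 else 0)" if "j < K" "l < K" for j l
  proof -
    have "cnj (cnj (\<Sum>i<N. F i j * cnj (F i l))) = cnj (if j = l then 1 else 0)"
      using cnj_form[OF that] by (rule arg_cong)
    thus ?thesis by (simp only: complex_cnj_cnj) (simp add: if_distrib)
  qed
  thus ?thesis unfolding orthonormal_cols_def by blast
qed

lemma parseval_iff_orthonormal_cols: "parseval_frame K N F \<longleftrightarrow> orthonormal_cols N K F"
  using parseval_imp_orthonormal_cols orthonormal_cols_imp_parseval by blast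


section \<open>Extending orthonormal families; the Naimark complement\<close>

lemma orthonormal_cols_square_rows:
  assumes "orthonormal_cols n n A"
  shows "\<forall>i<n. \<forall>i'<n. (\<Sum>j<n. A i j * cnj (A i' j)) = (if i = i' then 1 else 0)"
proof -
  have "\<forall>i<n. \<forall>j<n. (\<Sum>k<n. cnj (A k i) * A k j) = (if i = j then 1 else 0)"
  proof (intro allI impI)
    fix i j assume "i < n" "j < n"
    hence "(\<Sum>k<n. A k i * cnj (A k j)) = (if i = j then 1 else 0)"
      using assms unfolding orthonormal_cols_def by auto
    hence "cnj (\<Sum>k<n. A k i * cnj (A k j)) = (if i = j then 1 else 0)" by simp
    thus "(\<Sum>k<n. cnj (A k i) * A k j) = (if i = j then 1 else 0)" by (simp add: cnj_sum mult_ac)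
  qed
  from right_inverse_imp_left_inverse[OF this] show ?thesis by (simp add: mult_ac)
qed

lemma exists_orthogonal_unit_vector:
  assumes "finite I" "card I < n"
  shows "\<exists>y. vinner n y y = 1 \<and> (\<forall>b\<in>I. vinner n y (u b) = 0)"
proof -
  obtain h where h: "bij_betw h {0..<card I} I" using ex_bij_betw_nat_finite[OF assms(1)] by blast
  obtain x where x: "\<exists>j<n. x j \<noteq> 0" "\<forall>a<card I. (\<Sum>j<n. cnj (u (h a) j) * x j) = 0"
    using exists_kernel_vector[OF assms(2), of "\<lambda>a j. cnj (u (h a) j)"] by blast
  have "vinner n x (u b) = 0" if b: "b \<in> I" for b
  proof -
    have "b \<in> h ` {0..<card I}" using h b by (simp add: bij_betw_def)
    then obtain a where "a < card I" "b = h a" by auto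
    thus ?thesis using x(2) unfolding vinner_def by (simp add: mult_ac)
  qed
  moreover have "vnorm2 n x > 0" using x(1) vnorm2_pos by blast
  ultimately show ?thesis using normalized_vector by blast
qed

lemma orthonormal_on_insert:
  assumes "orthonormal_on n I u" "vinner n y y = 1" "\<forall>b\<in>I. vinner n y (u b) = 0"
  shows "orthonormal_on n (insert d I) (u(d := y))"
  unfolding orthonormal_on_def
proof (intro ballI)
  fix a b assume ab: "a \<in> insert d I" "b \<in> insert d I"
  have yu: "vinner n (u a) y = 0" if "a \<in> I" "a \<noteq> d" for a
    using assms(3) that vinner_cnj[of n "u a" y] by simp
  show "vinner n ((u(d := y)) a) ((u(d := y)) b) = (if a = b then 1 else 0)"
    using assms(1,2,3) ab yu unfolding orthonormal_on_def by (cases "a = d"; cases "b = d") auto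
qed

lemma extend_orthonormal:
  assumes "finite D" "finite S" "D \<inter> S = {}" "card (S \<union> D) \<le> n" "orthonormal_on n S u"
  shows "\<exists>w. orthonormal_on n (S \<union> D) w \<and> (\<forall>a\<in>S. w a = u a)"
  using assms
proof (induction D rule: finite_induct)
  case empty thus ?case by auto
next
  case (insert d D)
  have "card (S \<union> D) \<le> card (S \<union> insert d D)"
    using insert by (intro card_mono) auto
  then obtain w where w: "orthonormal_on n (S \<union> D) w" "\<forall>a\<in>S. w a = u a"
    using insert by auto
  have dn: "d \<notin> S \<union> D" using insert by auto
  hence "card (S \<union> D) < n" using insert.prems insert.hyps by simp
  then obtain y where y: "vinner n y y = 1" "\<forall>b\<in>S \<union> D. vinner n y (w b) = 0"
    using exists_orthogonal_unit_vector[of "S \<union> D" n w] insert by auto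
  have "orthonormal_on n (S \<union> insert d D) (w(d := y))"
    using orthonormal_on_insert[OF w(1) y] by simp
  moreover have "\<forall>a\<in>S. (w(d := y)) a = u a" using w(2) dn by auto
  ultimately show ?case by blast
qed

lemma extend_orthonormal_prefix:
  assumes "k \<le> n" "orthonormal_on n {..<k} v"
  shows "\<exists>w. orthonormal_on n {..<n} w \<and> (\<forall>a<k. w a = v a)"
proof -
  have u: "{..<k} \<union> {k..<n} = {..<n}" using assms(1) by auto
  have "{k..<n} \<inter> {..<k} = {}" by auto
  from extend_orthonormal[of "{k..<n}" "{..<k}" n v, OF _ _ this] assms(2)
  show ?thesis unfolding u by auto
qed

lemma extend_to_unitary:
  assumes "orthonormal_cols N M P" "M \<le> N"
  shows "\<exists>W. orthonormal_cols N N W \<and> (\<forall>i j. j < M \<longrightarrow> W i j = P i j)"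
proof -
  obtain w where w: "orthonormal_on N {..<N} w" "\<forall>a<M. w a = (\<lambda>i. P i a)"
    using extend_orthonormal_prefix[OF assms(2)] assms(1) orthonormal_cols_iff_on by blast
  have "orthonormal_cols N N (\<lambda>i j. w j i)" using w(1) orthonormal_cols_iff_on by simp
  moreover have "\<forall>i j. j < M \<longrightarrow> w j i = P i j" using w(2) by auto
  ultimately show ?thesis by blast
qed

text \<open>The Gram matrix of a frame X in C^K; for a Parseval frame it is the matrix of the
  orthogonal projection X X* onto the range of the analysis operator.\<close>
definition gram :: "nat \<Rightarrow> (nat \<Rightarrow> nat \<Rightarrow> complex) \<Rightarrow> nat \<Rightarrow> nat \<Rightarrow> complex" where
  "gram K X i i' = (\<Sum>j<K. X i j * cnj (X i' j))"

lemma gram_diag: "gram K X i i = complex_of_real (vnorm2 K (X i))"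
  unfolding gram_def using vinner_self[of K "X i"] unfolding vinner_def .

lemma naimark_complement:
  assumes "orthonormal_cols N M P" "M \<le> N"
  shows "\<exists>Q. orthonormal_cols N (N - M) Q \<and>
     (\<forall>i<N. \<forall>i'<N. gram M P i i' + gram (N - M) Q i i' = (if i = i' then 1 else 0))"
proof -
  obtain W where W: "orthonormal_cols N N W" "\<forall>i j. j < M \<longrightarrow> W i j = P i j"
    using extend_to_unitary[OF assms] by blast
  define Q where "Q = (\<lambda>i j. W i (M + j))"
  have NM: "M + (N - M) = N" using assms(2) by simp
  have "orthonormal_cols N (N - M) Q"
    using W(1) unfolding orthonormal_cols_def Q_def by simp
  moreover have "gram M P i i' + gram (N - M) Q i i' = (if i = i' then 1 else 0)"
    if ii: "i < N" "i' < N" for i i'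
  proof -
    have "gram M P i i' + gram (N - M) Q i i' = (\<Sum>j<M + (N - M). W i j * cnj (W i' j))"
      using W(2) by (simp add: sum_lessThan_add gram_def Q_def)
    also have "\<dots> = (if i = i' then 1 else 0)"
      using orthonormal_cols_square_rows[OF W(1)] ii unfolding NM by auto
    finally show ?thesis .
  qed
  ultimately show ?thesis by blast
qed

lemma onb_expansion:
  assumes "orthonormal_on n {..<n} w" "i < n"
  shows "y i = (\<Sum>b<n. vinner n y (w b) * w b i)"
proof -
  have rows: "\<forall>i<n. \<forall>i'<n. (\<Sum>b<n. w b i * cnj (w b i')) = (if i = i' then 1 else 0)"
    using orthonormal_cols_square_rows[of n "\<lambda>i b. w b i"] assms(1) orthonormal_cols_iff_on by auto
  have "(\<Sum>b<n. vinner n y (w b) * w b i) = (\<Sum>b<n. \<Sum>j<n. y j * (w b i * cnj (w b j)))"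
    by (simp add: vinner_def sum_distrib_left mult_ac)
  also have "\<dots> = (\<Sum>j<n. \<Sum>b<n. y j * (w b i * cnj (w b j)))" by (rule sum.swap)
  also have "\<dots> = (\<Sum>j<n. y j * (if i = j then 1 else 0))"
    by (intro sum.cong refl) (use rows assms(2) in \<open>simp add: sum_distrib_left[symmetric]\<close>)
  also have "\<dots> = y i" using assms(2) by (simp add: if_distrib sum.delta cong: if_cong)
  finally show ?thesis by simp
qed

lemma vinner_orthonormal_combination:
  fixes x :: "nat \<Rightarrow> complex"
  assumes "orthonormal_on n (f ` {..<m}) w" "inj_on f {..<m}"
  defines "y \<equiv> (\<lambda>i. \<Sum>q<m. x q * w (f q) i)"
  shows "vinner n y y = complex_of_real (vnorm2 m x)"
proof -
  have o: "vinner n (w (f q)) (w (f q')) = (if q = q' then 1 else 0)" if "q < m" "q' < m" for q q'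
    using assms(1,2) that unfolding orthonormal_on_def inj_on_def by auto
  have "vinner n y y = (\<Sum>q<m. \<Sum>q'<m. x q * cnj (x q') * vinner n (w (f q)) (w (f q')))"
    unfolding y_def vinner_sum_left vinner_sum_right vinner_scale_left vinner_scale_right
    by (simp add: sum_distrib_left mult_ac)
  also have "\<dots> = (\<Sum>q<m. \<Sum>q'<m. x q * cnj (x q') * (if q = q' then 1 else 0))"
    using o by (intro sum.cong refl) auto
  also have "\<dots> = vinner m x x"
    unfolding vinner_def by (intro sum.cong refl) (simp add: if_distrib sum.delta cong: if_cong)
  finally show ?thesis unfolding vinner_self .
qed


section \<open>Spectral theorem for Hermitian matrices\<close>

definition hermitian :: "nat \<Rightarrow> (nat \<Rightarrow> nat \<Rightarrow> complex) \<Rightarrow> bool" where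
  "hermitian n H \<longleftrightarrow> (\<forall>i<n. \<forall>j<n. H j i = cnj (H i j))"

definition mat_apply :: "nat \<Rightarrow> (nat \<Rightarrow> nat \<Rightarrow> complex) \<Rightarrow> (nat \<Rightarrow> complex) \<Rightarrow> nat \<Rightarrow> complex" where
  "mat_apply n H x = (\<lambda>i. \<Sum>j<n. H i j * x j)"

lemma mat_apply_sum: "mat_apply n H (\<lambda>j. \<Sum>q\<in>A. f q j) i = (\<Sum>q\<in>A. mat_apply n H (f q) i)"
  unfolding mat_apply_def by (simp add: sum_distrib_left) (rule sum.swap)

lemma mat_apply_scale: "mat_apply n H (\<lambda>j. c * f j) i = c * mat_apply n H f i"
  unfolding mat_apply_def by (simp add: sum_distrib_left mult_ac)

lemma hermitian_vinner:
  assumes "hermitian n H"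
  shows "vinner n (mat_apply n H z) u = vinner n z (mat_apply n H u)"
proof -
  have "vinner n (mat_apply n H z) u = (\<Sum>i<n. \<Sum>j<n. H i j * z j * cnj (u i))"
    by (simp add: vinner_def mat_apply_def sum_distrib_right)
  also have "\<dots> = (\<Sum>j<n. \<Sum>i<n. H i j * z j * cnj (u i))" by (rule sum.swap)
  also have "\<dots> = (\<Sum>j<n. \<Sum>i<n. z j * (cnj (H j i) * cnj (u i)))"
  proof (intro sum.cong refl)
    fix j i assume "j \<in> {..<n}" "i \<in> {..<n}"
    hence "H i j = cnj (H j i)" using assms unfolding hermitian_def by blast
    thus "H i j * z j * cnj (u i) = z j * (cnj (H j i) * cnj (u i))" by (simp only: mult_ac)
  qed
  also have "\<dots> = vinner n z (mat_apply n H u)"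
    by (simp add: vinner_def mat_apply_def sum_distrib_left cnj_sum)
  finally show ?thesis .
qed

text \<open>A Hermitian matrix maps the orthogonal complement of a family of eigenvectors to
  itself: in an orthonormal basis w starting with eigenvectors, H w_(k+q) is a combination of
  the remaining basis vectors w_(k+p).\<close>
lemma hermitian_complement_invariant:
  assumes herm: "hermitian n H" and w: "orthonormal_on n {..<n} w"
    and eig: "\<forall>a<k. \<forall>i<n. mat_apply n H (w a) i = ev a * w a i"
    and m: "k + m = n" and q: "q < m" and i: "i < n"
  shows "mat_apply n H (w (k + q)) i
       = (\<Sum>p<m. vinner n (mat_apply n H (w (k + q))) (w (k + p)) * w (k + p) i)"
proof -
  let ?Hw = "mat_apply n H (w (k + q))"
  have wo: "vinner n (w a) (w b) = (if a = b then 1 else 0)" if "a < n" "b < n" for a b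
    using w that unfolding orthonormal_on_def by auto
  have "vinner n ?Hw (w b) = 0" if b: "b < k" for b
  proof -
    have "vinner n ?Hw (w b) = vinner n (w (k + q)) (mat_apply n H (w b))"
      by (rule hermitian_vinner[OF herm])
    also have "\<dots> = vinner n (w (k + q)) (\<lambda>i. ev b * w b i)"
      unfolding vinner_def using eig b by (intro sum.cong refl) auto
    also have "\<dots> = 0" unfolding vinner_scale_right using wo b q m by simp
    finally show ?thesis .
  qed
  hence "(\<Sum>b<k. vinner n ?Hw (w b) * w b i) = 0" by simp
  moreover have "?Hw i = (\<Sum>b<k. vinner n ?Hw (w b) * w b i)
                    + (\<Sum>p<m. vinner n ?Hw (w (k + p)) * w (k + p) i)"
    using onb_expansion[OF w i, of ?Hw] unfolding m[symmetric] sum_lessThan_add .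
  ultimately show ?thesis by simp
qed

text \<open>Hence an eigenvector x of the compression C of H to the span of w_k, ..., w_(n-1)
  gives the eigenvector y = \<Sum> x_q w_(k+q) of H itself.\<close>
lemma hermitian_compression_eigenvector:
  assumes herm: "hermitian n H" and w: "orthonormal_on n {..<n} w"
    and eig: "\<forall>a<k. \<forall>i<n. mat_apply n H (w a) i = ev a * w a i" and m: "k + m = n"
    and x: "\<forall>p<m. (\<Sum>q<m. vinner n (mat_apply n H (w (k + q))) (w (k + p)) * x q) = \<mu> * x p"
    and i: "i < n"
  defines "y \<equiv> (\<lambda>i. \<Sum>q<m. x q * w (k + q) i)"
  shows "mat_apply n H y i = \<mu> * y i"
proof -
  define C where "C = (\<lambda>p q. vinner n (mat_apply n H (w (k + q))) (w (k + p)))"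
  have xC: "\<forall>p<m. (\<Sum>q<m. C p q * x q) = \<mu> * x p" using x unfolding C_def .
  have "mat_apply n H y i = (\<Sum>q<m. x q * (\<Sum>p<m. C p q * w (k + p) i))"
    unfolding y_def mat_apply_sum mat_apply_scale C_def
    using hermitian_complement_invariant[OF herm w eig m _ i] by simp
  also have "\<dots> = (\<Sum>q<m. \<Sum>p<m. C p q * x q * w (k + p) i)"
    by (simp add: sum_distrib_left mult_ac)
  also have "\<dots> = (\<Sum>p<m. \<Sum>q<m. C p q * x q * w (k + p) i)"
    by (rule sum.swap)
  also have "\<dots> = (\<Sum>p<m. (\<Sum>q<m. C p q * x q) * w (k + p) i)"
    by (simp add: sum_distrib_right)
  also have "\<dots> = \<mu> * y i" using xC unfolding y_def by (simp add: sum_distrib_left mult_ac)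
  finally show ?thesis .
qed

lemma hermitian_next_eigenvector:
  assumes herm: "hermitian n H" and k: "k < n"
    and v: "orthonormal_on n {..<k} v" "\<forall>a<k. \<forall>i<n. mat_apply n H (v a) i = ev a * v a i"
  shows "\<exists>y \<mu>. vinner n y y = 1 \<and> (\<forall>a<k. vinner n y (v a) = 0)
               \<and> (\<forall>i<n. mat_apply n H y i = \<mu> * y i)"
proof -
  obtain w where w: "orthonormal_on n {..<n} w" and wv: "\<forall>a<k. w a = v a"
    using extend_orthonormal_prefix[OF _ v(1)] k by auto
  define m where "m = n - k"
  have m: "m > 0" "k + m = n" using k unfolding m_def by auto
  have weig: "\<forall>a<k. \<forall>i<n. mat_apply n H (w a) i = ev a * w a i" using v(2) wv by simp
  obtain \<mu> x where x: "\<exists>q<m. x q \<noteq> 0"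
    "\<forall>p<m. (\<Sum>q<m. vinner n (mat_apply n H (w (k + q))) (w (k + p)) * x q) = \<mu> * x p"
    using exists_eigenvector[OF m(1), of "\<lambda>p q. vinner n (mat_apply n H (w (k + q))) (w (k + p))"]
    by blast
  define y where "y = (\<lambda>i. \<Sum>q<m. x q * w (k + q) i)"
  have eig: "\<forall>i<n. mat_apply n H y i = \<mu> * y i"
    unfolding y_def using hermitian_compression_eigenvector[OF herm w weig m(2) x(2)] by blast
  have orth: "vinner n y (v a) = 0" if a: "a < k" for a
  proof -
    have "vinner n (w (k + q)) (w a) = 0" if "q < m" for q
    proof -
      have "k + q < n" "a < n" "k + q \<noteq> a" using that a m by auto
      thus ?thesis using w unfolding orthonormal_on_def by simp
    qed
    thus ?thesis unfolding y_def vinner_sum_left vinner_scale_left using wv a by simp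
  qed
  have "orthonormal_on n ((\<lambda>q. k + q) ` {..<m}) w" using w m unfolding orthonormal_on_def by auto
  hence "vinner n y y = complex_of_real (vnorm2 m x)"
    unfolding y_def by (intro vinner_orthonormal_combination) auto
  moreover have "vnorm2 m x > 0" using x(1) vnorm2_pos by blast
  ultimately have pos: "vnorm2 n y > 0" using vinner_self[of n y] by simp
  define y' where "y' = (\<lambda>j. complex_of_real (1 / sqrt (vnorm2 n y)) * y j)"
  have "vinner n y' y' = 1" "\<forall>a<k. vinner n y' (v a) = 0"
    using normalized_vector[OF pos] orth unfolding y'_def by auto
  moreover have "\<forall>i<n. mat_apply n H y' i = \<mu> * y' i"
    unfolding y'_def mat_apply_scale using eig by simp
  ultimately show ?thesis by blast
qed

lemma hermitian_eigenbasis: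
  assumes herm: "hermitian n H"
  shows "\<exists>v ev. orthonormal_on n {..<n} v \<and> (\<forall>a<n. \<forall>i<n. mat_apply n H (v a) i = ev a * v a i)"
proof -
  have "k \<le> n \<Longrightarrow> \<exists>v ev. orthonormal_on n {..<k} v
                           \<and> (\<forall>a<k. \<forall>i<n. mat_apply n H (v a) i = ev a * v a i)" for k
  proof (induction k)
    case 0 thus ?case by (auto simp: orthonormal_on_def)
  next
    case (Suc k)
    then obtain v ev where v: "orthonormal_on n {..<k} v"
        "\<forall>a<k. \<forall>i<n. mat_apply n H (v a) i = ev a * v a i" by auto
    obtain y \<mu> where y: "vinner n y y = 1" "\<forall>a<k. vinner n y (v a) = 0"
        "\<forall>i<n. mat_apply n H y i = \<mu> * y i"
      using hermitian_next_eigenvector[OF herm _ v] Suc(2) by auto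
    have "orthonormal_on n {..<Suc k} (v(k := y))"
      using orthonormal_on_insert[OF v(1) y(1)] y(2) lessThan_Suc by simp
    moreover have "\<forall>a<Suc k. \<forall>i<n. mat_apply n H ((v(k := y)) a) i = (ev(k := \<mu>)) a * (v(k := y)) a i"
      using v(2) y(3) by (auto simp: less_Suc_eq)
    ultimately show ?case by blast
  qed
  thus ?thesis by blast
qed


section \<open>Unitary invariance\<close>

lemma orthonormal_cols_mult:
  assumes "orthonormal_cols n m A" "orthonormal_cols m k B"
  shows "orthonormal_cols n k (\<lambda>i q. \<Sum>p<m. A i p * B p q)"
  unfolding orthonormal_cols_def
proof (intro allI impI)
  fix q q' assume q: "q < k" "q' < k"
  have "(\<Sum>i<n. (\<Sum>p<m. A i p * B p q) * cnj (\<Sum>p<m. A i p * B p q'))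
      = (\<Sum>i<n. \<Sum>p<m. \<Sum>p'<m. B p q * cnj (B p' q') * (A i p * cnj (A i p')))"
    by (simp add: sum_product cnj_sum mult_ac)
  also have "\<dots> = (\<Sum>p<m. \<Sum>p'<m. \<Sum>i<n. B p q * cnj (B p' q') * (A i p * cnj (A i p')))"
    by (rule sum_swap3)
  also have "\<dots> = (\<Sum>p<m. \<Sum>p'<m. B p q * cnj (B p' q') * (if p = p' then 1 else 0))"
    using assms(1) unfolding orthonormal_cols_def
    by (intro sum.cong refl) (simp add: sum_distrib_left[symmetric])
  also have "\<dots> = (\<Sum>p<m. B p q * cnj (B p q'))"
    by (intro sum.cong refl) (simp add: if_distrib sum.delta cong: if_cong)
  also have "\<dots> = (if q = q' then 1 else 0)" using assms(2) q unfolding orthonormal_cols_def by auto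
  finally show "(\<Sum>i<n. (\<Sum>p<m. A i p * B p q) * cnj (\<Sum>p<m. A i p * B p q'))
      = (if q = q' then 1 else 0)" .
qed

lemma unitary_conj_transpose:
  assumes "orthonormal_cols K K U"
  shows "orthonormal_cols K K (\<lambda>q p. cnj (U p q))"
  unfolding orthonormal_cols_def
proof (intro allI impI)
  fix p p' assume "p < K" "p' < K"
  hence "(\<Sum>q<K. U p q * cnj (U p' q)) = (if p = p' then 1 else 0)"
    using orthonormal_cols_square_rows[OF assms] by auto
  hence "cnj (\<Sum>q<K. U p q * cnj (U p' q)) = (if p = p' then 1 else 0)" by simp
  thus "(\<Sum>q<K. cnj (U p q) * cnj (cnj (U p' q))) = (if p = p' then 1 else 0)"
    by (simp add: cnj_sum)
qed

lemma orthonormal_cols_norm: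
  assumes "orthonormal_cols N K P"
  shows "vnorm2 N (\<lambda>i. \<Sum>q<K. P i q * x q) = vnorm2 K x"
proof -
  have "cmod (\<Sum>q<K. P i q * x q) = cmod (vinner K (\<lambda>q. cnj (x q)) (P i))" for i
  proof -
    have "vinner K (\<lambda>q. cnj (x q)) (P i) = cnj (\<Sum>q<K. P i q * x q)"
      unfolding vinner_def cnj_sum complex_cnj_mult complex_cnj_cnj by (simp add: mult.commute)
    thus ?thesis by (metis complex_mod_cnj)
  qed
  hence "vnorm2 N (\<lambda>i. \<Sum>q<K. P i q * x q) = (\<Sum>i<N. (cmod (vinner K (\<lambda>q. cnj (x q)) (P i)))^2)"
    unfolding vnorm2_def by simp
  also have "\<dots> = vnorm2 K (\<lambda>q. cnj (x q))"
    using orthonormal_cols_imp_parseval[OF assms] unfolding parseval_frame_def by blast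
  also have "\<dots> = vnorm2 K x" unfolding vnorm2_def by simp
  finally show ?thesis .
qed

lemma row_norm_unitary:
  assumes "orthonormal_cols K K U"
  shows "vnorm2 K (\<lambda>q. \<Sum>p<K. x p * U p q) = vnorm2 K x"
proof -
  have "vnorm2 K (\<lambda>q. \<Sum>p<K. x p * U p q) = (\<Sum>q<K. (cmod (vinner K x (\<lambda>p. cnj (U p q))))^2)"
    unfolding vnorm2_def vinner_def by simp
  also have "\<dots> = vnorm2 K x"
    using orthonormal_cols_imp_parseval[OF unitary_conj_transpose[OF assms]]
    unfolding parseval_frame_def by blast
  finally show ?thesis .
qed

lemma bessel_inequality:
  assumes "orthonormal_cols N K B" "K \<le> N"
  shows "(\<Sum>p<K. (cmod (vinner N y (\<lambda>i. B i p)))^2) \<le> vnorm2 N y"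
proof -
  obtain W where W: "orthonormal_cols N N W" "\<forall>i j. j < K \<longrightarrow> W i j = B i j"
    using extend_to_unitary[OF assms] by blast
  have "orthonormal_cols N N (\<lambda>p i. W i p)"
    using orthonormal_cols_square_rows[OF W(1)] unfolding orthonormal_cols_def by auto
  hence P: "parseval_frame N N (\<lambda>p i. W i p)" using orthonormal_cols_imp_parseval by blast
  have "(\<Sum>p<K. (cmod (vinner N y (\<lambda>i. B i p)))^2) = (\<Sum>p<K. (cmod (vinner N y (\<lambda>i. W i p)))^2)"
    using W(2) by simp
  also have "\<dots> \<le> (\<Sum>p<N. (cmod (vinner N y (\<lambda>i. W i p)))^2)"
    using assms(2) by (intro sum_mono2) auto
  also have "\<dots> = vnorm2 N y" using P unfolding parseval_frame_def by blast
  finally show ?thesis .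
qed

lemma sum_row_norms:
  assumes "orthonormal_cols N K P"
  shows "(\<Sum>i<N. vnorm2 K (P i)) = real K"
proof -
  have "complex_of_real (\<Sum>i<N. vnorm2 K (P i)) = (\<Sum>i<N. \<Sum>j<K. P i j * cnj (P i j))"
    by (simp add: vnorm2_def of_real_sum of_real_cmod_sq)
  also have "\<dots> = (\<Sum>j<K. \<Sum>i<N. P i j * cnj (P i j))" by (rule sum.swap)
  also have "\<dots> = of_nat K" using assms unfolding orthonormal_cols_def by simp
  finally show ?thesis by (metis of_real_eq_iff of_real_of_nat_eq)
qed


section \<open>Singular value decomposition\<close>

lemma images_of_eigenvectors_orthogonal:
  fixes A :: "nat \<Rightarrow> nat \<Rightarrow> complex"
  assumes v: "orthonormal_on K {..<K} v"
    and ev: "\<forall>a<K. \<forall>i<K. mat_apply K (\<lambda>q r. \<Sum>p<K. cnj (A p q) * A p r) (v a) i = ev a * v a i"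
    and jl: "j < K" "l < K" "j \<noteq> l"
  shows "vinner K (\<lambda>p. \<Sum>q<K. A p q * v j q) (\<lambda>p. \<Sum>q<K. A p q * v l q) = 0"
proof -
  have "vinner K (\<lambda>p. \<Sum>q<K. A p q * v j q) (\<lambda>p. \<Sum>q<K. A p q * v l q)
      = (\<Sum>p<K. \<Sum>q<K. \<Sum>r<K. A p q * v j q * (cnj (A p r) * cnj (v l r)))"
    unfolding vinner_def by (simp add: sum_product cnj_sum)
  also have "\<dots> = (\<Sum>q<K. \<Sum>r<K. \<Sum>p<K. A p q * v j q * (cnj (A p r) * cnj (v l r)))"
    by (rule sum_swap3)
  also have "\<dots> = (\<Sum>r<K. \<Sum>q<K. \<Sum>p<K. A p q * v j q * (cnj (A p r) * cnj (v l r)))"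
    by (rule sum.swap)
  also have "\<dots> = (\<Sum>r<K. cnj (v l r) * mat_apply K (\<lambda>q r. \<Sum>p<K. cnj (A p q) * A p r) (v j) r)"
    unfolding mat_apply_def by (simp add: sum_distrib_left sum_distrib_right mult_ac)
  also have "\<dots> = (\<Sum>r<K. cnj (v l r) * (ev j * v j r))"
    using ev jl by simp
  also have "\<dots> = ev j * vinner K (v j) (v l)"
    unfolding vinner_def by (simp add: sum_distrib_left mult_ac)
  also have "vinner K (v j) (v l) = 0" using v jl unfolding orthonormal_on_def by auto
  finally show ?thesis by simp
qed

text \<open>Every square matrix A has orthonormal bases v, w of C^K and singular values s \<ge> 0
  with A v_j = s_j w_j: the v_j are eigenvectors of A* A, the w_j normalize the A v_j.\<close>
lemma singular_value_decomposition:
  fixes A :: "nat \<Rightarrow> nat \<Rightarrow> complex"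
  shows "\<exists>v w s. orthonormal_on K {..<K} v \<and> orthonormal_on K {..<K} w \<and>
     (\<forall>j<K. s j \<ge> 0 \<and> (\<forall>p<K. (\<Sum>q<K. A p q * v j q) = complex_of_real (s j) * w j p))"
proof -
  have "hermitian K (\<lambda>q r. \<Sum>p<K. cnj (A p q) * A p r)"
    unfolding hermitian_def by (simp add: cnj_sum mult.commute)
  then obtain v ev where v: "orthonormal_on K {..<K} v"
    and ev: "\<forall>a<K. \<forall>i<K. mat_apply K (\<lambda>q r. \<Sum>p<K. cnj (A p q) * A p r) (v a) i = ev a * v a i"
    using hermitian_eigenbasis by blast
  define a where "a = (\<lambda>j p. \<Sum>q<K. A p q * v j q)"
  define s where "s = (\<lambda>j. sqrt (vnorm2 K (a j)))"
  define S where "S = {j. j < K \<and> s j > 0}"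
  define u where "u = (\<lambda>j p. complex_of_real (1 / s j) * a j p)"
  have "orthonormal_on K S u" unfolding orthonormal_on_def
  proof (intro ballI)
    fix j l assume jl: "j \<in> S" "l \<in> S"
    have "vinner K (u j) (u l) = complex_of_real (1 / s j * (1 / s l)) * vinner K (a j) (a l)"
      unfolding u_def vinner_scale_left vinner_scale_right by simp
    also have "\<dots> = (if j = l then 1 else 0)"
    proof (cases "j = l")
      case True
      have sq: "s j * s j = vnorm2 K (a j)" unfolding s_def using vnorm2_nonneg by simp
      have "1 / s j * (1 / s j) * (s j * s j) = 1" using jl(1) unfolding S_def by simp
      hence "1 / s j * (1 / s j) * vnorm2 K (a j) = 1" unfolding sq .
      thus ?thesis using True vinner_self[of K "a j"]
        by (simp only: of_real_mult[symmetric] of_real_1) simp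
    next
      case False
      thus ?thesis using images_of_eigenvectors_orthogonal[OF v ev] jl unfolding S_def a_def by simp
    qed
    finally show "vinner K (u j) (u l) = (if j = l then 1 else 0)" .
  qed
  moreover have "S \<union> ({..<K} - S) = {..<K}" "finite S" "({..<K} - S) \<inter> S = {}"
    unfolding S_def by auto
  ultimately obtain w where w: "orthonormal_on K {..<K} w" and wu: "\<forall>j\<in>S. w j = u j"
    using extend_orthonormal[of "{..<K} - S" S K u] by auto
  have "a j p = complex_of_real (s j) * w j p" if "j < K" "p < K" for j p
  proof (cases "j \<in> S")
    case True
    hence "s j \<noteq> 0" unfolding S_def by simp
    thus ?thesis using wu True unfolding u_def by simp
  next
    case False
    hence "vnorm2 K (a j) = 0" using that vnorm2_nonneg[of K "a j"] unfolding S_def s_def by simp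
    thus ?thesis using vnorm2_eq_0_imp_zero[of K "a j" p] that unfolding s_def by simp
  qed
  moreover have "s j \<ge> 0" for j unfolding s_def by (simp add: vnorm2_nonneg)
  ultimately have "\<forall>j<K. s j \<ge> 0 \<and> (\<forall>p<K. (\<Sum>q<K. A p q * v j q) = complex_of_real (s j) * w j p)"
    unfolding a_def by blast
  with v w show ?thesis by blast
qed

lemma sum_sq_singular_values:
  fixes A :: "nat \<Rightarrow> nat \<Rightarrow> complex"
  assumes v: "orthonormal_on K {..<K} v" and w: "orthonormal_on K {..<K} w"
    and s: "\<forall>j<K. \<forall>p<K. (\<Sum>q<K. A p q * v j q) = complex_of_real (s j) * w j p"
  shows "(\<Sum>j<K. (s j)^2) = (\<Sum>p<K. \<Sum>q<K. (cmod (A p q))^2)"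
proof -
  have VI: "orthonormal_cols K K (\<lambda>j q. cnj (v j q))"
    using unitary_conj_transpose[of K "\<lambda>q j. v j q"] v orthonormal_cols_iff_on by simp
  have "(s j)^2 = (\<Sum>p<K. (cmod (vinner K (\<lambda>q. A p q) (\<lambda>q. cnj (v j q))))^2)" if "j < K" for j
  proof -
    have "(s j)^2 = vnorm2 K (\<lambda>p. complex_of_real (s j) * w j p)"
      using vinner_self[of K "w j"] w that unfolding vnorm2_scale orthonormal_on_def by simp
    also have "\<dots> = (\<Sum>p<K. (cmod (\<Sum>q<K. A p q * v j q))^2)"
      unfolding vnorm2_def using s that by simp
    finally show ?thesis unfolding vinner_def by simp
  qed
  hence "(\<Sum>j<K. (s j)^2) = (\<Sum>j<K. \<Sum>p<K. (cmod (vinner K (\<lambda>q. A p q) (\<lambda>q. cnj (v j q))))^2)"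
    by simp
  also have "\<dots> = (\<Sum>p<K. \<Sum>j<K. (cmod (vinner K (\<lambda>q. A p q) (\<lambda>q. cnj (v j q))))^2)"
    by (rule sum.swap)
  also have "\<dots> = (\<Sum>p<K. \<Sum>q<K. (cmod (A p q))^2)"
    using orthonormal_cols_imp_parseval[OF VI] unfolding parseval_frame_def vnorm2_def by simp
  finally show ?thesis .
qed


section \<open>Distances between Parseval frames\<close>

lemma cmod_diff_sq: "(cmod (a - b))^2 = (cmod a)^2 + (cmod b)^2 - 2 * Re (a * cnj b)"
proof -
  have "complex_of_real ((cmod (a - b))^2) = (a - b) * cnj (a - b)" by (rule complex_norm_square)
  also have "\<dots> = a * cnj a + b * cnj b - (a * cnj b + cnj (a * cnj b))" by (simp add: algebra_simps)
  also have "\<dots> = complex_of_real ((cmod a)^2 + (cmod b)^2 - 2 * Re (a * cnj b))"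
    by (simp only: complex_norm_square complex_add_cnj of_real_add of_real_diff)
  finally show ?thesis by (simp only: of_real_eq_iff)
qed

lemma cmod_add_sq_le: "(cmod (a + b))^2 \<le> 2 * (cmod a)^2 + 2 * (cmod b)^2"
proof -
  have "(cmod (a + b))^2 \<le> (cmod a + cmod b)^2" by (intro power_mono norm_triangle_ineq) auto
  also have "\<dots> \<le> 2 * (cmod a)^2 + 2 * (cmod b)^2"
    using sum_squares_bound[of "cmod a" "cmod b"] by (simp add: power2_eq_square algebra_simps)
  finally show ?thesis .
qed

lemma frame_dist_nonneg: "frame_dist K N F G \<ge> 0"
  unfolding frame_dist_def by (intro sum_nonneg vnorm2_nonneg)

lemma frame_dist_eq:
  assumes "orthonormal_cols N K F" "orthonormal_cols N K G"
  shows "frame_dist K N F G = 2 * real K - 2 * Re (\<Sum>i<N. \<Sum>j<K. F i j * cnj (G i j))"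
proof -
  have "frame_dist K N F G
      = (\<Sum>i<N. \<Sum>j<K. (cmod (F i j))^2 + (cmod (G i j))^2 - 2 * Re (F i j * cnj (G i j)))"
    unfolding frame_dist_def vnorm2_def cmod_diff_sq by simp
  also have "\<dots> = (\<Sum>i<N. vnorm2 K (F i)) + (\<Sum>i<N. vnorm2 K (G i))
                 - 2 * Re (\<Sum>i<N. \<Sum>j<K. F i j * cnj (G i j))"
    by (simp add: vnorm2_def sum.distrib sum_subtractf sum_distrib_left Re_sum)
  also have "\<dots> = 2 * real K - 2 * Re (\<Sum>i<N. \<Sum>j<K. F i j * cnj (G i j))"
    using sum_row_norms[OF assms(1)] sum_row_norms[OF assms(2)] by simp
  finally show ?thesis .
qed

lemma frame_dist_le:
  assumes "orthonormal_cols N K F" "orthonormal_cols N K G"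
  shows "frame_dist K N F G \<le> 4 * real K"
proof -
  have "(cmod (a - b))^2 \<le> 2 * (cmod a)^2 + 2 * (cmod b)^2" for a b :: complex
    using cmod_add_sq_le[of a "- b"] by simp
  hence "frame_dist K N F G \<le> (\<Sum>i<N. \<Sum>j<K. 2 * (cmod (F i j))^2 + 2 * (cmod (G i j))^2)"
    unfolding frame_dist_def vnorm2_def by (intro sum_mono)
  also have "\<dots> = 2 * (\<Sum>i<N. vnorm2 K (F i)) + 2 * (\<Sum>i<N. vnorm2 K (G i))"
    by (simp add: vnorm2_def sum.distrib sum_distrib_left)
  also have "\<dots> = 4 * real K" using sum_row_norms[OF assms(1)] sum_row_norms[OF assms(2)] by simp
  finally show ?thesis .
qed

lemma gram_dist_le_frame_dist:
  assumes "orthonormal_cols N K X" "orthonormal_cols N K Y"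
  shows "(\<Sum>i<N. \<Sum>i'<N. (cmod (gram K X i i' - gram K Y i i'))^2) \<le> 4 * frame_dist K N X Y"
proof -
  define D where "D = (\<lambda>i j. X i j - Y i j)"
  have PX: "parseval_frame K N X" and PY: "parseval_frame K N Y"
    using assms orthonormal_cols_imp_parseval by auto
  have eq: "gram K X i i' - gram K Y i i' = vinner K (D i) (X i') + cnj (vinner K (D i') (Y i))" for i i'
    unfolding gram_def vinner_def D_def cnj_sum
    by (simp add: sum_subtractf[symmetric] sum.distrib[symmetric] algebra_simps)
  have "(\<Sum>i<N. \<Sum>i'<N. (cmod (gram K X i i' - gram K Y i i'))^2)
     \<le> (\<Sum>i<N. \<Sum>i'<N. 2 * (cmod (vinner K (D i) (X i')))^2 + 2 * (cmod (vinner K (D i') (Y i)))^2)"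
    unfolding eq by (intro sum_mono) (metis cmod_add_sq_le complex_mod_cnj)
  also have "\<dots> = 2 * (\<Sum>i<N. \<Sum>i'<N. (cmod (vinner K (D i) (X i')))^2)
                 + 2 * (\<Sum>i<N. \<Sum>i'<N. (cmod (vinner K (D i') (Y i)))^2)"
    by (simp add: sum.distrib sum_distrib_left)
  also have "(\<Sum>i<N. \<Sum>i'<N. (cmod (vinner K (D i') (Y i)))^2)
           = (\<Sum>i'<N. \<Sum>i<N. (cmod (vinner K (D i') (Y i)))^2)"
    by (rule sum.swap)
  also have "\<dots> = (\<Sum>i'<N. vnorm2 K (D i'))" using PY unfolding parseval_frame_def by simp
  also have "(\<Sum>i<N. \<Sum>i'<N. (cmod (vinner K (D i) (X i')))^2) = (\<Sum>i<N. vnorm2 K (D i))"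
    using PX unfolding parseval_frame_def by simp
  also have "(\<Sum>i<N. vnorm2 K (D i)) = frame_dist K N X Y" unfolding frame_dist_def D_def by simp
  finally show ?thesis by simp
qed

text \<open>The matrix P'* P of inner products between the columns of two frames.\<close>
definition cross_gram ::
  "nat \<Rightarrow> (nat \<Rightarrow> nat \<Rightarrow> complex) \<Rightarrow> (nat \<Rightarrow> nat \<Rightarrow> complex) \<Rightarrow> nat \<Rightarrow> nat \<Rightarrow> complex" where
  "cross_gram N P P' p q = (\<Sum>i<N. P i q * cnj (P' i p))"

lemma gram_dist_eq:
  assumes "orthonormal_cols N K P" "orthonormal_cols N K P'"
  shows "(\<Sum>i<N. \<Sum>i'<N. (cmod (gram K P i i' - gram K P' i i'))^2)
       = 2 * real K - 2 * (\<Sum>p<K. \<Sum>q<K. (cmod (cross_gram N P P' p q))^2)"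
proof -
  have norm: "(\<Sum>i<N. \<Sum>i'<N. (cmod (gram K X i i'))^2) = real K" if "orthonormal_cols N K X" for X
  proof -
    have "(\<Sum>i<N. \<Sum>i'<N. (cmod (gram K X i i'))^2) = (\<Sum>i<N. vnorm2 K (X i))"
      using orthonormal_cols_imp_parseval[OF that]
      unfolding parseval_frame_def gram_def vinner_def by simp
    thus ?thesis using sum_row_norms[OF that] by simp
  qed
  have cross: "(\<Sum>i<N. \<Sum>i'<N. gram K P i i' * cnj (gram K P' i i'))
      = complex_of_real (\<Sum>p<K. \<Sum>q<K. (cmod (cross_gram N P P' p q))^2)"
  proof -
    have "(\<Sum>i<N. \<Sum>i'<N. gram K P i i' * cnj (gram K P' i i'))
        = (\<Sum>i<N. \<Sum>i'<N. \<Sum>q<K. \<Sum>p<K. P i q * cnj (P i' q) * (cnj (P' i p) * P' i' p))"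
      unfolding gram_def by (simp add: sum_product cnj_sum)
    also have "\<dots> = (\<Sum>q<K. \<Sum>p<K. \<Sum>i<N. \<Sum>i'<N. P i q * cnj (P i' q) * (cnj (P' i p) * P' i' p))"
      by (rule sum_swap4)
    also have "\<dots> = (\<Sum>q<K. \<Sum>p<K. cross_gram N P P' p q * cnj (cross_gram N P P' p q))"
      unfolding cross_gram_def by (simp add: sum_product cnj_sum mult_ac)
    also have "\<dots> = complex_of_real (\<Sum>p<K. \<Sum>q<K. (cmod (cross_gram N P P' p q))^2)"
      by (subst sum.swap) (simp add: of_real_sum of_real_cmod_sq)
    finally show ?thesis .
  qed
  have "(\<Sum>i<N. \<Sum>i'<N. (cmod (gram K P i i' - gram K P' i i'))^2)
     = (\<Sum>i<N. \<Sum>i'<N. (cmod (gram K P i i'))^2) + (\<Sum>i<N. \<Sum>i'<N. (cmod (gram K P' i i'))^2)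
       - 2 * Re (\<Sum>i<N. \<Sum>i'<N. gram K P i i' * cnj (gram K P' i i'))"
    unfolding cmod_diff_sq by (simp add: sum.distrib sum_subtractf sum_distrib_left Re_sum)
  also have "\<dots> = 2 * real K - 2 * (\<Sum>p<K. \<Sum>q<K. (cmod (cross_gram N P P' p q))^2)"
    unfolding norm[OF assms(1)] norm[OF assms(2)] cross Re_complex_of_real by simp
  finally show ?thesis .
qed

text \<open>For Parseval frames P, P' the matrix P'* P is a contraction (Bessel's inequality).\<close>
lemma cross_gram_contraction:
  assumes PI: "orthonormal_cols N K P" and PI': "orthonormal_cols N K P'" and KN: "K \<le> N"
  shows "vnorm2 K (\<lambda>p. \<Sum>q<K. cross_gram N P P' p q * x q) \<le> vnorm2 K x"
proof -
  define y where "y = (\<lambda>i. \<Sum>q<K. P i q * x q)"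
  have "(\<Sum>q<K. cross_gram N P P' p q * x q) = vinner N y (\<lambda>i. P' i p)" for p
  proof -
    have "vinner N y (\<lambda>i. P' i p) = (\<Sum>i<N. \<Sum>q<K. P i q * x q * cnj (P' i p))"
      unfolding vinner_def y_def by (simp add: sum_distrib_right)
    also have "\<dots> = (\<Sum>q<K. \<Sum>i<N. P i q * x q * cnj (P' i p))" by (rule sum.swap)
    finally show ?thesis unfolding cross_gram_def by (simp add: sum_distrib_left mult_ac)
  qed
  hence "vnorm2 K (\<lambda>p. \<Sum>q<K. cross_gram N P P' p q * x q)
       = (\<Sum>p<K. (cmod (vinner N y (\<lambda>i. P' i p)))^2)"
    unfolding vnorm2_def by simp
  also have "\<dots> \<le> vnorm2 N y" by (rule bessel_inequality[OF PI' KN])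
  also have "\<dots> = vnorm2 K x" unfolding y_def by (rule orthonormal_cols_norm[OF PI])
  finally show ?thesis .
qed

text \<open>The Hilbert-Schmidt inner product of P with the rotation P' W V*, in terms of the
  columns v_j of V and w_j of W.\<close>
lemma hs_inner_rotation:
  "(\<Sum>i<N. \<Sum>q<K. P i q * cnj (\<Sum>p<K. P' i p * (\<Sum>j<K. w j p * cnj (v j q))))
     = (\<Sum>j<K. vinner K (\<lambda>p. \<Sum>q<K. cross_gram N P P' p q * v j q) (w j))"
proof -
  have "(\<Sum>i<N. \<Sum>q<K. P i q * cnj (\<Sum>p<K. P' i p * (\<Sum>j<K. w j p * cnj (v j q))))
      = (\<Sum>i<N. \<Sum>q<K. \<Sum>p<K. P i q * cnj (P' i p) * (\<Sum>j<K. v j q * cnj (w j p)))"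
    by (simp add: cnj_sum sum_distrib_left mult_ac)
  also have "\<dots> = (\<Sum>q<K. \<Sum>p<K. \<Sum>i<N. P i q * cnj (P' i p) * (\<Sum>j<K. v j q * cnj (w j p)))"
    by (rule sum_swap3)
  also have "\<dots> = (\<Sum>q<K. \<Sum>p<K. cross_gram N P P' p q * (\<Sum>j<K. v j q * cnj (w j p)))"
    unfolding cross_gram_def by (simp add: sum_distrib_right)
  also have "\<dots> = (\<Sum>q<K. \<Sum>p<K. \<Sum>j<K. cross_gram N P P' p q * v j q * cnj (w j p))"
    by (simp add: sum_distrib_left mult_ac)
  also have "\<dots> = (\<Sum>j<K. \<Sum>q<K. \<Sum>p<K. cross_gram N P P' p q * v j q * cnj (w j p))"
    by (rule sum_swap3[symmetric])
  also have "\<dots> = (\<Sum>j<K. \<Sum>p<K. \<Sum>q<K. cross_gram N P P' p q * v j q * cnj (w j p))"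
    by (rule sum.cong[OF refl], rule sum.swap)
  also have "\<dots> = (\<Sum>j<K. vinner K (\<lambda>p. \<Sum>q<K. cross_gram N P P' p q * v j q) (w j))"
    unfolding vinner_def by (simp add: sum_distrib_right)
  finally show ?thesis .
qed

text \<open>Among the rotations P' U (U unitary) of P' there is one whose distance to P is at most
  2K - 2 |P'* P|^2. With P'* P = W S V* (singular value decomposition) take U = W V*:
  then d(P, P' U) = 2K - 2 tr S, while |P'* P|^2 = tr S^2 and S \<le> 1.\<close>
lemma exists_close_rotation:
  assumes PI: "orthonormal_cols N K P" and PI': "orthonormal_cols N K P'" and KN: "K \<le> N"
  shows "\<exists>P''. orthonormal_cols N K P'' \<and> (\<forall>i<N. vnorm2 K (P'' i) = vnorm2 K (P' i)) \<and>
     frame_dist K N P P'' \<le> 2 * real K - 2 * (\<Sum>p<K. \<Sum>q<K. (cmod (cross_gram N P P' p q))^2)"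
proof -
  define A where "A = cross_gram N P P'"
  obtain v w s where v: "orthonormal_on K {..<K} v" and w: "orthonormal_on K {..<K} w"
    and s: "\<forall>j<K. s j \<ge> 0 \<and> (\<forall>p<K. (\<Sum>q<K. A p q * v j q) = complex_of_real (s j) * w j p)"
    using singular_value_decomposition by blast
  define U where "U = (\<lambda>p q. \<Sum>j<K. w j p * cnj (v j q))"
  have "orthonormal_cols K K (\<lambda>j q. cnj (v j q))"
    using unitary_conj_transpose[of K "\<lambda>q j. v j q"] v orthonormal_cols_iff_on by simp
  hence UI: "orthonormal_cols K K U"
    unfolding U_def using w orthonormal_cols_iff_on by (intro orthonormal_cols_mult) auto
  define P'' where "P'' = (\<lambda>i q. \<Sum>p<K. P' i p * U p q)"
  have P''I: "orthonormal_cols N K P''" unfolding P''_def by (rule orthonormal_cols_mult[OF PI' UI])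
  have rows: "\<forall>i<N. vnorm2 K (P'' i) = vnorm2 K (P' i)"
    unfolding P''_def using row_norm_unitary[OF UI] by simp
  have "vinner K (\<lambda>p. \<Sum>q<K. A p q * v j q) (w j) = complex_of_real (s j)" if "j < K" for j
  proof -
    have "vinner K (\<lambda>p. \<Sum>q<K. A p q * v j q) (w j) = vinner K (\<lambda>p. complex_of_real (s j) * w j p) (w j)"
      unfolding vinner_def using s that by simp
    also have "\<dots> = complex_of_real (s j)"
      using w that unfolding vinner_scale_left orthonormal_on_def by simp
    finally show ?thesis .
  qed
  hence "(\<Sum>i<N. \<Sum>q<K. P i q * cnj (P'' i q)) = (\<Sum>j<K. complex_of_real (s j))"
    unfolding P''_def U_def hs_inner_rotation A_def[symmetric] by simp
  hence dist: "frame_dist K N P P'' = 2 * real K - 2 * (\<Sum>j<K. s j)"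
    using frame_dist_eq[OF PI P''I] by (simp add: Re_sum)
  have "s j \<le> 1" if j: "j < K" for j
  proof -
    have "(s j)^2 = vnorm2 K (\<lambda>p. complex_of_real (s j) * w j p)"
      using vinner_self[of K "w j"] w j unfolding vnorm2_scale orthonormal_on_def by simp
    also have "\<dots> = vnorm2 K (\<lambda>p. \<Sum>q<K. A p q * v j q)"
      unfolding vnorm2_def using s j by simp
    also have "\<dots> \<le> vnorm2 K (v j)" unfolding A_def by (rule cross_gram_contraction[OF PI PI' KN])
    also have "\<dots> = 1" using v j vinner_self[of K "v j"] unfolding orthonormal_on_def by simp
    finally show ?thesis using s j by (simp add: power_le_one_iff)
  qed
  hence "(\<Sum>j<K. (s j)^2) \<le> (\<Sum>j<K. s j)"
    using s by (intro sum_mono) (simp add: power2_eq_square mult_left_le)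
  moreover have "(\<Sum>j<K. (s j)^2) = (\<Sum>p<K. \<Sum>q<K. (cmod (A p q))^2)"
    by (rule sum_sq_singular_values[OF v w]) (use s in blast)
  ultimately have "frame_dist K N P P'' \<le> 2 * real K - 2 * (\<Sum>p<K. \<Sum>q<K. (cmod (A p q))^2)"
    using dist by simp
  thus ?thesis using P''I rows unfolding A_def by blast
qed


section \<open>Harmonic frames\<close>

text \<open>The first K columns of the unitary discrete Fourier matrix form an equal norm Parseval
  frame of N vectors for C^K; in particular equal norm Parseval frames exist.\<close>
lemma harmonic_frame:
  assumes N: "0 < N" and KN: "K \<le> N"
  shows "\<exists>G. parseval_frame K N G \<and> (\<forall>i<N. vnorm2 K (G i) = real K / real N)"
proof -
  define \<omega> where "\<omega> = (\<lambda>j. cis (2 * pi * real j / real N))"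
  define c where "c = complex_of_real (1 / sqrt (real N))"
  define G where "G = (\<lambda>i j. c * \<omega> j ^ i)"
  have cc: "c * cnj c = 1 / real N" unfolding c_def using N by (simp flip: of_real_mult)
  have inj: "inj_on \<omega> {..<N}" using bij_betw_roots_unity[OF N] unfolding \<omega>_def bij_betw_def by blast
  have \<omega>_unit: "\<omega> l * cnj (\<omega> l) = 1" for l unfolding \<omega>_def by (simp add: cis_cnj cis_mult)
  have \<omega>_root: "\<omega> j ^ N = 1" for j
    unfolding \<omega>_def DeMoivre using N by (simp add: cis_multiple_2pi)
  have "orthonormal_cols N K G" unfolding orthonormal_cols_def
  proof (intro allI impI)
    fix j l assume jl: "j < K" "l < K"
    define z where "z = \<omega> j * cnj (\<omega> l)"
    have "(\<Sum>i<N. G i j * cnj (G i l)) = c * cnj c * (\<Sum>i<N. z ^ i)"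
      unfolding G_def z_def by (simp add: sum_distrib_left power_mult_distrib mult_ac)
    also have "\<dots> = (if j = l then 1 else 0)"
    proof (cases "j = l")
      case True
      thus ?thesis using cc N \<omega>_unit unfolding z_def by simp
    next
      case False
      have "z \<noteq> 1"
      proof
        assume "z = 1"
        hence "\<omega> j = \<omega> l" using \<omega>_unit[of l] unfolding z_def by (metis mult.assoc mult.right_neutral mult.commute)
        thus False using inj jl KN False unfolding inj_on_def by auto
      qed
      moreover have "cnj (\<omega> l) ^ N = 1" using \<omega>_root[of l] by (metis complex_cnj_one complex_cnj_power)
      hence "z ^ N = 1" using \<omega>_root[of j] unfolding z_def by (simp add: power_mult_distrib)
      ultimately have "(\<Sum>i<N. z ^ i) = 0" by (simp add: geometric_sum)
      thus ?thesis using False by simp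
    qed
    finally show "(\<Sum>i<N. G i j * cnj (G i l)) = (if j = l then 1 else 0)" .
  qed
  moreover have "vnorm2 K (G i) = real K / real N" for i
  proof -
    have "(cmod (G i j))^2 = 1 / real N" for j
      unfolding G_def c_def \<omega>_def using N by (simp add: norm_divide norm_power power_divide)
    thus ?thesis unfolding vnorm2_def by simp
  qed
  ultimately show ?thesis using orthonormal_cols_imp_parseval by blast
qed


section \<open>Transfer of distances through Naimark complements\<close>

lemma complement_row_norm:
  assumes "gram K1 X i i + gram K2 Y i i = 1"
  shows "vnorm2 K2 (Y i) = 1 - vnorm2 K1 (X i)"
proof -
  have "complex_of_real (vnorm2 K1 (X i) + vnorm2 K2 (Y i)) = complex_of_real 1"
    using assms unfolding gram_diag by simp
  hence "vnorm2 K1 (X i) + vnorm2 K2 (Y i) = 1" by (simp only: of_real_eq_iff)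
  thus ?thesis by simp
qed

text \<open>Let Q be a Naimark complement of the Parseval frame F. Every equal norm
  Parseval frame G' for C^(N-M) yields, through its own Naimark complement, an equal norm
  Parseval frame G for C^M with d(F,G) \<le> 4 d(Q,G'): the Gram matrices satisfy
  F F* - R R* = G' G'* - Q Q*, and a suitable rotation G of R is as close to F as the
  Gram matrices are to each other.\<close>
lemma complement_transfer:
  assumes MN: "M \<le> N" and FI: "orthonormal_cols N M F"
    and QI: "orthonormal_cols N (N - M) Q"
    and FQ: "\<forall>i<N. \<forall>i'<N. gram M F i i' + gram (N - M) Q i i' = (if i = i' then 1 else 0)"
    and PG: "parseval_frame (N - M) N G'" and EG: "equal_norm (N - M) N G'"
  shows "\<exists>G. parseval_frame M N G \<and> equal_norm M N G
             \<and> frame_dist M N F G \<le> 4 * frame_dist (N - M) N Q G'"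
proof -
  have GI: "orthonormal_cols N (N - M) G'" using PG parseval_iff_orthonormal_cols by blast
  have NM: "N - (N - M) = M" using MN by simp
  obtain R where RI: "orthonormal_cols N M R"
    and GR: "\<forall>i<N. \<forall>i'<N. gram (N - M) G' i i' + gram M R i i' = (if i = i' then 1 else 0)"
    using naimark_complement[OF GI] NM by auto
  obtain G where GGI: "orthonormal_cols N M G" and rows: "\<forall>i<N. vnorm2 M (G i) = vnorm2 M (R i)"
    and dG: "frame_dist M N F G \<le> 2 * real M - 2 * (\<Sum>p<M. \<Sum>q<M. (cmod (cross_gram N F R p q))^2)"
    using exists_close_rotation[OF FI RI MN] by blast
  have gram_eq: "cmod (gram M F i i' - gram M R i i') = cmod (gram (N - M) Q i i' - gram (N - M) G' i i')"
    if "i < N" "i' < N" for i i'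
  proof -
    have "gram M F i i' - gram M R i i' = - (gram (N - M) Q i i' - gram (N - M) G' i i')"
      using FQ GR that by (simp add: algebra_simps)
    thus ?thesis by (simp only: norm_minus_cancel)
  qed
  have "frame_dist M N F G \<le> (\<Sum>i<N. \<Sum>i'<N. (cmod (gram M F i i' - gram M R i i'))^2)"
    using dG gram_dist_eq[OF FI RI] by simp
  also have "\<dots> = (\<Sum>i<N. \<Sum>i'<N. (cmod (gram (N - M) Q i i' - gram (N - M) G' i i'))^2)"
    using gram_eq by simp
  also have "\<dots> \<le> 4 * frame_dist (N - M) N Q G'" by (rule gram_dist_le_frame_dist[OF QI GI])
  finally have close: "frame_dist M N F G \<le> 4 * frame_dist (N - M) N Q G'" .
  have norm_G: "vnorm2 M (G i) = 1 - vnorm2 (N - M) (G' i)" if "i < N" for i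
    using rows complement_row_norm[of "N - M" G' i M R] GR that by simp
  have "equal_norm M N G" unfolding equal_norm_def
  proof (intro allI impI)
    fix i i' assume ii: "i < N" "i' < N"
    hence "vnorm2 (N - M) (G' i) = vnorm2 (N - M) (G' i')" using EG unfolding equal_norm_def by blast
    thus "vnorm2 M (G i) = vnorm2 M (G i')" using norm_G ii by simp
  qed
  thus ?thesis using close GGI parseval_iff_orthonormal_cols by blast
qed

lemma complement_bound_identity:
  fixes m r e :: real
  assumes "r > 0" "m + r > 0"
  shows "(1 + e * m / r) * r / (m + r) = 1 - (1 - e) * m / (m + r)"
proof -
  have "(1 + e * m / r) * r = (m + r) - (1 - e) * m" using assms(1) by (simp add: field_simps)
  hence "(1 + e * m / r) * r / (m + r) = ((m + r) - (1 - e) * m) / (m + r)" by simp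
  also have "\<dots> = 1 - (1 - e) * m / (m + r)" using assms(2) by (simp add: diff_divide_distrib)
  finally show ?thesis .
qed

lemma nearly_equal_norm_complement:
  assumes MN: "M < N"
    and nF: "nearly_equal_norm \<epsilon> M N F"
    and rn: "\<forall>i<N. vnorm2 (N - M) (Q i) = 1 - vnorm2 M (F i)"
  shows "nearly_equal_norm (\<epsilon> * real M / real (N - M)) (N - M) N Q"
  unfolding nearly_equal_norm_def
proof (intro allI impI)
  fix i assume i: "i < N"
  define m r where "m = real M" and "r = real (N - M)"
  have pos: "r > 0" "m + r > 0" and N_eq: "real N = m + r" using MN unfolding m_def r_def by auto
  have "(1 - \<epsilon> * m / r) * r / (m + r) = 1 - (1 + \<epsilon>) * m / (m + r)"
    using complement_bound_identity[OF pos, of "- \<epsilon>"] by simp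
  moreover have "(1 + \<epsilon> * m / r) * r / (m + r) = 1 - (1 - \<epsilon>) * m / (m + r)"
    by (rule complement_bound_identity[OF pos])
  ultimately show "(1 - \<epsilon> * real M / real (N - M)) * real (N - M) / real N \<le> vnorm2 (N - M) (Q i) \<and>
        vnorm2 (N - M) (Q i) \<le> (1 + \<epsilon> * real M / real (N - M)) * real (N - M) / real N"
    using nF rn i unfolding nearly_equal_norm_def N_eq m_def[symmetric] r_def[symmetric] by auto
qed


section \<open>The optimal Parseval Paulsen function\<close>

definition dist_to_enpf :: "nat \<Rightarrow> nat \<Rightarrow> (nat \<Rightarrow> nat \<Rightarrow> complex) \<Rightarrow> real" where
  "dist_to_enpf K N F = Inf {frame_dist K N F G | G. parseval_frame K N G \<and> equal_norm K N G}"

lemma paulsen_F_eq_Sup: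
  "paulsen_F \<delta> K N = Sup {dist_to_enpf K N F | F. parseval_frame K N F \<and> nearly_equal_norm \<delta> K N F}"
  unfolding paulsen_F_def dist_to_enpf_def ..

lemma exists_enpf:
  assumes "0 < N" "K \<le> N" "\<delta> \<ge> 0"
  shows "\<exists>G. parseval_frame K N G \<and> equal_norm K N G \<and> nearly_equal_norm \<delta> K N G"
proof -
  obtain G where G: "parseval_frame K N G" "\<forall>i<N. vnorm2 K (G i) = real K / real N"
    using harmonic_frame[OF assms(1,2)] by blast
  have "(1 - \<delta>) * real K \<le> real K" "real K \<le> (1 + \<delta>) * real K"
    using assms(3) by (simp_all add: algebra_simps)
  hence "(1 - \<delta>) * real K / real N \<le> real K / real N" "real K / real N \<le> (1 + \<delta>) * real K / real N"
    by (simp_all add: divide_right_mono)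
  thus ?thesis using G unfolding equal_norm_def nearly_equal_norm_def by auto
qed

lemma dist_to_enpf_le:
  assumes "parseval_frame K N G" "equal_norm K N G"
  shows "dist_to_enpf K N F \<le> frame_dist K N F G"
proof -
  have "bdd_below {frame_dist K N F G | G. parseval_frame K N G \<and> equal_norm K N G}"
    unfolding bdd_below_def using frame_dist_nonneg by blast
  thus ?thesis unfolding dist_to_enpf_def using assms by (intro cInf_lower) auto
qed

lemma dist_to_enpf_approx:
  assumes "0 < N" "K \<le> N" "e > 0"
  shows "\<exists>G. parseval_frame K N G \<and> equal_norm K N G \<and> frame_dist K N F G < dist_to_enpf K N F + e"
proof -
  have "{frame_dist K N F G | G. parseval_frame K N G \<and> equal_norm K N G} \<noteq> {}"
    using exists_enpf[OF assms(1,2), of 0] by auto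
  from cInf_lessD[OF this, of "dist_to_enpf K N F + e"] show ?thesis
    using assms(3) unfolding dist_to_enpf_def by auto
qed

lemma dist_to_enpf_nonneg:
  assumes "0 < N" "K \<le> N"
  shows "dist_to_enpf K N F \<ge> 0"
  using exists_enpf[OF assms, of 0] unfolding dist_to_enpf_def
  by (intro cInf_greatest) (auto intro: frame_dist_nonneg)

text \<open>A uniform bound, showing that the supremum defining the Paulsen function is finite.\<close>
lemma dist_to_enpf_le_dim:
  assumes "0 < N" "K \<le> N" "parseval_frame K N F"
  shows "dist_to_enpf K N F \<le> 4 * real K"
proof -
  obtain G where "parseval_frame K N G" "equal_norm K N G" using exists_enpf[OF assms(1,2), of 0] by auto
  hence "dist_to_enpf K N F \<le> frame_dist K N F G" by (rule dist_to_enpf_le)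
  also have "\<dots> \<le> 4 * real K"
    using frame_dist_le assms(3) \<open>parseval_frame K N G\<close> parseval_iff_orthonormal_cols by blast
  finally show ?thesis .
qed

lemma paulsen_F_upper:
  assumes "0 < N" "K \<le> N" "parseval_frame K N F" "nearly_equal_norm \<delta> K N F"
  shows "dist_to_enpf K N F \<le> paulsen_F \<delta> K N"
  unfolding paulsen_F_eq_Sup
  by (rule cSup_upper) (use assms dist_to_enpf_le_dim in \<open>auto intro!: bdd_aboveI[of _ "4 * real K"]\<close>)

lemma paulsen_F_nonneg:
  assumes "0 < N" "K \<le> N" "\<delta> \<ge> 0"
  shows "paulsen_F \<delta> K N \<ge> 0"
proof -
  obtain G where "parseval_frame K N G" "nearly_equal_norm \<delta> K N G" using exists_enpf[OF assms] by auto
  thus ?thesis using paulsen_F_upper dist_to_enpf_nonneg assms by (meson order_trans)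
qed

lemma paulsen_F_least:
  assumes "0 < N" "K \<le> N" "\<delta> \<ge> 0"
    and bound: "\<And>F. parseval_frame K N F \<Longrightarrow> nearly_equal_norm \<delta> K N F \<Longrightarrow> dist_to_enpf K N F \<le> c"
  shows "paulsen_F \<delta> K N \<le> c"
  unfolding paulsen_F_eq_Sup
  by (rule cSup_least) (use exists_enpf[OF assms(1-3)] bound in auto)

lemma dist_to_enpf_complement:
  assumes MN: "M \<le> N" and N: "0 < N" and FI: "orthonormal_cols N M F"
    and QI: "orthonormal_cols N (N - M) Q"
    and FQ: "\<forall>i<N. \<forall>i'<N. gram M F i i' + gram (N - M) Q i i' = (if i = i' then 1 else 0)"
  shows "dist_to_enpf M N F \<le> 4 * dist_to_enpf (N - M) N Q"
proof (rule field_le_epsilon)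
  fix e :: real assume e: "e > 0"
  obtain G' where G': "parseval_frame (N - M) N G'" "equal_norm (N - M) N G'"
    and close: "frame_dist (N - M) N Q G' < dist_to_enpf (N - M) N Q + e / 4"
    using dist_to_enpf_approx[OF N _, of "N - M" "e / 4" Q] e by auto
  obtain G where G: "parseval_frame M N G" "equal_norm M N G"
    and GF: "frame_dist M N F G \<le> 4 * frame_dist (N - M) N Q G'"
    using complement_transfer[OF MN FI QI FQ G'] by blast
  have "dist_to_enpf M N F \<le> frame_dist M N F G" using G by (rule dist_to_enpf_le)
  also have "\<dots> \<le> 4 * dist_to_enpf (N - M) N Q + e" using GF close by simp
  finally show "dist_to_enpf M N F \<le> 4 * dist_to_enpf (N - M) N Q + e" .
qed

theorem theorem6p1:
  fixes M N :: nat and \<epsilon> :: real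
  assumes "1 \<le> M" and "M < N" and "\<epsilon> > 0"
  shows "paulsen_F \<epsilon> M N \<le> 8 * paulsen_F (\<epsilon> * real M / real (N - M)) (N - M) N"
proof -
  define \<delta> where "\<delta> = \<epsilon> * real M / real (N - M)"
  have N: "0 < N" and MN: "M \<le> N" and \<delta>: "\<delta> \<ge> 0" using assms unfolding \<delta>_def by auto
  have "paulsen_F \<epsilon> M N \<le> 4 * paulsen_F \<delta> (N - M) N"
  proof (rule paulsen_F_least[OF N MN])
    fix F assume PF: "parseval_frame M N F" and nF: "nearly_equal_norm \<epsilon> M N F"
    have FI: "orthonormal_cols N M F" using PF parseval_iff_orthonormal_cols by blast
    obtain Q where QI: "orthonormal_cols N (N - M) Q"
      and FQ: "\<forall>i<N. \<forall>i'<N. gram M F i i' + gram (N - M) Q i i' = (if i = i' then 1 else 0)"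
      using naimark_complement[OF FI MN] by blast
    have "nearly_equal_norm \<delta> (N - M) N Q"
      unfolding \<delta>_def using FQ complement_row_norm
      by (intro nearly_equal_norm_complement[OF assms(2) nF]) auto
    hence "dist_to_enpf (N - M) N Q \<le> paulsen_F \<delta> (N - M) N"
      using QI parseval_iff_orthonormal_cols by (intro paulsen_F_upper[OF N]) auto
    thus "dist_to_enpf M N F \<le> 4 * paulsen_F \<delta> (N - M) N"
      using dist_to_enpf_complement[OF MN N FI QI FQ] by linarith
  qed (use assms in simp)
  moreover have "paulsen_F \<delta> (N - M) N \<ge> 0" using paulsen_F_nonneg[OF N _ \<delta>] by simp
  ultimately show ?thesis unfolding \<delta>_def by linarith
qed

end
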